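(* For any finite, simple, connected graph $G$, if $\gamma_P(G)=1$, then $\gamma_P(G\,\Box\,P_2)\le 2$.
   Context: The Cartesian product $G\,\Box\,H$ has vertex set $V(G)\times V(H)$, with $(g,h)$ adjacent to $(g',h')$ iff either $g=g'$ and $hh'\in E(H)$, or $h=h'$ and $gg'\in E(G)$; $P_2$ is the path on two vertices. For $U\subseteq V$, $cl(U)$ is obtained by coloring $U$ black and repeatedly applying: if a black vertex has exactly one white neighbor, that neighbor becomes black. $S$ is a power dominating set if $cl(N[S])=V$; $\gamma_P$ is the minimum size of a power dominating set. *)

theory Defs
  imports Main
begin

definition simple_graph :: "'a set \<Rightarrow> ('a \<Rightarrow> 'a \<Rightarrow> bool) \<Rightarrow> bool" where
  "simple_graph V E \<longleftrightarrow> finite V \<and> (\<forall>x y. E x y \<longrightarrow> x \<in> V \<and> y \<in> V)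
     \<and> (\<forall>x y. E x y \<longrightarrow> E y x) \<and> (\<forall>x. \<not> E x x)"

definition connected_graph :: "'a set \<Rightarrow> ('a \<Rightarrow> 'a \<Rightarrow> bool) \<Rightarrow> bool" where
  "connected_graph V E \<longleftrightarrow> V \<noteq> {} \<and> (\<forall>x\<in>V. \<forall>y\<in>V. E\<^sup>*\<^sup>* x y)"

definition nbhd :: "('a \<Rightarrow> 'a \<Rightarrow> bool) \<Rightarrow> 'a \<Rightarrow> 'a set" where
  "nbhd E v = {w. E v w}"

definition closed_nbhd :: "('a \<Rightarrow> 'a \<Rightarrow> bool) \<Rightarrow> 'a set \<Rightarrow> 'a set" where
  "closed_nbhd E S = S \<union> {w. \<exists>v\<in>S. E v w}"

definition force_step :: "('a \<Rightarrow> 'a \<Rightarrow> bool) \<Rightarrow> 'a set \<Rightarrow> 'a set \<Rightarrow> bool" where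
  "force_step E B B' \<longleftrightarrow> (\<exists>v\<in>B. \<exists>w. nbhd E v - B = {w} \<and> B' = insert w B)"

text \<open>cl(U): all vertices that become black by repeatedly applying the rule
  starting from U (the rule only ever adds vertices; the result is the union of
  all reachable colourings).\<close>
definition cl :: "('a \<Rightarrow> 'a \<Rightarrow> bool) \<Rightarrow> 'a set \<Rightarrow> 'a set" where
  "cl E U = \<Union>{B. (force_step E)\<^sup>*\<^sup>* U B}"

definition power_dominating :: "'a set \<Rightarrow> ('a \<Rightarrow> 'a \<Rightarrow> bool) \<Rightarrow> 'a set \<Rightarrow> bool" where
  "power_dominating V E S \<longleftrightarrow> S \<subseteq> V \<and> cl E (closed_nbhd E S) = V"

definition power_domination_number :: "'a set \<Rightarrow> ('a \<Rightarrow> 'a \<Rightarrow> bool) \<Rightarrow> nat" where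
  "power_domination_number V E = (LEAST k. \<exists>S. power_dominating V E S \<and> card S = k)"

definition cart_prod_V :: "'a set \<Rightarrow> 'b set \<Rightarrow> ('a \<times> 'b) set" where
  "cart_prod_V VG VH = VG \<times> VH"

definition cart_prod_E :: "('a \<Rightarrow> 'a \<Rightarrow> bool) \<Rightarrow> ('b \<Rightarrow> 'b \<Rightarrow> bool) \<Rightarrow> ('a \<times> 'b) \<Rightarrow> ('a \<times> 'b) \<Rightarrow> bool" where
  "cart_prod_E EG EH p q \<longleftrightarrow>
     (fst p = fst q \<and> EH (snd p) (snd q)) \<or> (snd p = snd q \<and> EG (fst p) (fst q))"

definition P2_V :: "nat set" where "P2_V = {0, 1}"
definition P2_E :: "nat \<Rightarrow> nat \<Rightarrow> bool" where "P2_E a b \<longleftrightarrow> {a, b} = {0, 1}"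

end

theory Submission
  imports Defs
begin

text \<open>If S power dominates G, then S \<times> {0,1} power dominates G \<box> P2: the closed neighbourhood
  of S \<times> {0,1} is N[S] \<times> {0,1}, and every forcing step u \<rightarrow> w of G is mirrored by the two
  steps (u,0) \<rightarrow> (w,0) and (u,1) \<rightarrow> (w,1) in the prism, because the only neighbour of (u,i)
  outside the copy i of G is (u,1-i), which is already black. Hence the power domination
  number at most doubles.\<close>

lemma cl_superset: "U \<subseteq> cl E U"
  unfolding cl_def by blast

lemma cl_subset_closed:
  assumes closed: "\<And>x y. E x y \<Longrightarrow> x \<in> W \<Longrightarrow> y \<in> W" and "U \<subseteq> W"
  shows "cl E U \<subseteq> W"
proof -
  have "B \<subseteq> W" if "(force_step E)\<^sup>*\<^sup>* U B" for B
    using that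
  proof (induction rule: rtranclp_induct)
    case base
    then show ?case using \<open>U \<subseteq> W\<close> .
  next
    case (step B B')
    then obtain v w where "v \<in> B" "nbhd E v - B = {w}" "B' = insert w B"
      unfolding force_step_def by blast
    moreover from this have "E v w" unfolding nbhd_def by blast
    ultimately show ?case using step.IH closed by blast
  qed
  then show ?thesis unfolding cl_def by blast
qed

lemma nbhd_cart_prod_P2:
  assumes "i \<in> {0, 1}"
  shows "nbhd (cart_prod_E E P2_E) (v, i) = insert (v, 1 - i) (nbhd E v \<times> {i})"
  using assms unfolding nbhd_def cart_prod_E_def P2_E_def
  by (auto simp: doubleton_eq_iff)

lemma closed_nbhd_cart_prod_P2:
  "closed_nbhd (cart_prod_E E P2_E) (S \<times> {0, 1}) = closed_nbhd E S \<times> {0, 1}"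
  unfolding closed_nbhd_def cart_prod_E_def P2_E_def
  by (auto simp: doubleton_eq_iff)

lemma force_step_cart_prod_P2:
  assumes "force_step E B B'"
  shows "(force_step (cart_prod_E E P2_E))\<^sup>*\<^sup>* (B \<times> {0, 1}) (B' \<times> {0, 1})"
proof -
  obtain v w where v: "v \<in> B" and white: "nbhd E v - B = {w}" and B': "B' = insert w B"
    using assms unfolding force_step_def by blast
  let ?E = "cart_prod_E E P2_E"
  let ?B0 = "insert (w, 0) (B \<times> {0, 1})"
  have "force_step ?E (B \<times> {0, 1}) ?B0"
    unfolding force_step_def
  proof (intro bexI exI conjI)
    show "nbhd ?E (v, 0) - B \<times> {0, 1} = {(w, 0)}"
      using nbhd_cart_prod_P2[of 0 E v] white v by auto
  qed (use v in auto)
  moreover have "force_step ?E ?B0 (B' \<times> {0, 1})"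
    unfolding force_step_def
  proof (intro bexI exI conjI)
    show "nbhd ?E (v, 1) - ?B0 = {(w, 1)}"
      using nbhd_cart_prod_P2[of 1 E v] white v by auto
  qed (use v B' in auto)
  ultimately show ?thesis by simp
qed

lemma force_steps_cart_prod_P2:
  assumes "(force_step E)\<^sup>*\<^sup>* U B"
  shows "(force_step (cart_prod_E E P2_E))\<^sup>*\<^sup>* (U \<times> {0, 1}) (B \<times> {0, 1})"
  using assms
proof (induction rule: rtranclp_induct)
  case base
  then show ?case by simp
next
  case (step B B')
  then show ?case using force_step_cart_prod_P2[OF step(2)] by (meson rtranclp_trans)
qed

lemma cl_cart_prod_P2:
  "cl E U \<times> {0::nat, 1} \<subseteq> cl (cart_prod_E E P2_E) (U \<times> {0, 1})"
proof
  fix p assume "p \<in> cl E U \<times> {0::nat, 1}"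
  then obtain B where "(force_step E)\<^sup>*\<^sup>* U B" and "p \<in> B \<times> {0, 1}"
    unfolding cl_def by auto
  then show "p \<in> cl (cart_prod_E E P2_E) (U \<times> {0, 1})"
    using force_steps_cart_prod_P2 unfolding cl_def by blast
qed

lemma power_dominating_cart_prod_P2:
  assumes "simple_graph V E" and "power_dominating V E S"
  shows "power_dominating (cart_prod_V V P2_V) (cart_prod_E E P2_E) (S \<times> {0, 1})"
proof -
  let ?E = "cart_prod_E E P2_E"
  have edges: "\<And>x y. E x y \<Longrightarrow> x \<in> V \<and> y \<in> V"
    using assms(1) unfolding simple_graph_def by blast
  have S: "S \<subseteq> V" and cl_S: "cl E (closed_nbhd E S) = V"
    using assms(2) unfolding power_dominating_def by auto
  have "cl ?E (closed_nbhd ?E (S \<times> {0, 1})) \<subseteq> V \<times> {0, 1}"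
  proof (rule cl_subset_closed)
    show "closed_nbhd ?E (S \<times> {0, 1}) \<subseteq> V \<times> {0, 1}"
      using S edges unfolding closed_nbhd_cart_prod_P2 unfolding closed_nbhd_def by blast
    show "y \<in> V \<times> {0, 1}" if "?E x y" "x \<in> V \<times> {0, 1}" for x y
      using that edges unfolding cart_prod_E_def P2_E_def
      by (cases x; cases y) (auto simp: doubleton_eq_iff)
  qed
  moreover have "V \<times> {0, 1} \<subseteq> cl ?E (closed_nbhd ?E (S \<times> {0, 1}))"
    using cl_cart_prod_P2[of E "closed_nbhd E S"] cl_S
    unfolding closed_nbhd_cart_prod_P2 by simp
  ultimately show ?thesis
    using S unfolding power_dominating_def cart_prod_V_def P2_V_def by auto
qed

lemma power_dominating_vertex_set:
  assumes "simple_graph V E"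
  shows "power_dominating V E V"
proof -
  have edges: "\<And>x y. E x y \<Longrightarrow> x \<in> V \<and> y \<in> V"
    using assms unfolding simple_graph_def by blast
  then have "closed_nbhd E V = V" unfolding closed_nbhd_def by blast
  moreover have "cl E V \<subseteq> V" by (rule cl_subset_closed) (use edges in auto)
  ultimately show ?thesis
    unfolding power_dominating_def using cl_superset[of V E] by simp
qed

lemma power_domination_number_obtain:
  assumes "simple_graph V E"
  obtains S where "power_dominating V E S" and "card S = power_domination_number V E"
proof -
  have "\<exists>k S. power_dominating V E S \<and> card S = k"
    using power_dominating_vertex_set[OF assms] by blast
  then have "\<exists>S. power_dominating V E S \<and> card S = power_domination_number V E"
    unfolding power_domination_number_def by (rule LeastI_ex)
  then show ?thesis using that by blast
qed

lemma power_domination_number_le: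
  assumes "power_dominating V E S"
  shows "power_domination_number V E \<le> card S"
  using assms unfolding power_domination_number_def by (metis (mono_tags) Least_le)

lemma power_domination_number_cart_prod_P2_le:
  assumes "simple_graph V E"
  shows "power_domination_number (cart_prod_V V P2_V) (cart_prod_E E P2_E)
           \<le> 2 * power_domination_number V E"
proof -
  obtain S where S: "power_dominating V E S" and card_S: "card S = power_domination_number V E"
    using power_domination_number_obtain[OF assms] .
  have "finite S"
    using S assms finite_subset unfolding power_dominating_def simple_graph_def by blast
  then have "card (S \<times> {0::nat, 1}) = 2 * card S" by (simp add: card_cartesian_product)
  then show ?thesis
    using power_domination_number_le[OF power_dominating_cart_prod_P2[OF assms S]] card_S
    by simp
qed

theorem mainTheorem12:
  fixes V :: "'a set" and E :: "'a \<Rightarrow> 'a \<Rightarrow> bool"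
  assumes "simple_graph V E" and "connected_graph V E"
    and "power_domination_number V E = 1"
  shows "power_domination_number (cart_prod_V V P2_V) (cart_prod_E E P2_E) \<le> 2"
  using power_domination_number_cart_prod_P2_le[OF assms(1)] assms(3) by simp

end
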